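(* Let $T$ be sufficiently large and let $f:\mathbb{N}\to\mathbb{C}$ be completely multiplicative with $|f(n)|=1$ for all $n$. Let $2\le x\le\exp((\log T)^{1/2})$ and $y=\frac{\log T}{\log x\,(\log_2T)^8}$. Then there is a set of $t\in[0,T]$ of Lebesgue measure at least $T^{1-1/(\log_2T)^2}$ such that for all $t$ in this set $$\sum_{n\le x,\ n\in\mathcal{S}(y)}n^{\mathrm{i}t}=\sum_{n\le x,\ n\in\mathcal{S}(y)}f(n)+O\bigg(\frac{\Psi(x,y)}{(\log_2T)^2}\bigg).$$
   Context: $\log_2=\log\log$. $\mathcal{S}(y)$ is the set of positive integers all of whose prime factors are $\le y$, and $\Psi(x,y)=\#\{n\le x:n\in\mathcal{S}(y)\}$. *)

theory Defs
  imports "HOL-Analysis.Analysis" "HOL-Computational_Algebra.Primes"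
begin

definition smooth :: "real \<Rightarrow> nat set" where
  "smooth y = {n. n > 0 \<and> (\<forall>p\<in>prime_factors n. real p \<le> y)}"

definition Psi :: "real \<Rightarrow> real \<Rightarrow> nat" where
  "Psi x y = card {n. real n \<le> x \<and> n \<in> smooth y}"

definition completely_multiplicative :: "(nat \<Rightarrow> complex) \<Rightarrow> bool" where
  "completely_multiplicative f \<longleftrightarrow> f 1 = 1 \<and> (\<forall>m n. m > 0 \<longrightarrow> n > 0 \<longrightarrow> f (m * n) = f m * f n)"

definition nit :: "nat \<Rightarrow> real \<Rightarrow> complex" where
  "nit n t = exp (\<i> * of_real (t * ln (real n)))"

end

theory Submission
  imports Defs "HOL-Computational_Algebra.Polynomial" "HOL-Real_Asymp.Real_Asymp"
begin

text \<open>
  For the primes p <= min x y put w_p(t) = p^(it) conj (f p) and consider the kernel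
  D(t) = prod_p (sum_{j <= N} w_p(t)^j)^r. Always |D| <= (N + 1)^(r k), and if
  |p^(it) - f p| > delta then the geometric sum in the p-factor is at most 2 / delta.
  So |D|^2 is at most (N + 1)^(2 r k) on the set G of t with all |p^(it) - f p| <= delta,
  and off G at most (2 / delta)^(2 r) times the kernel with some p removed. Expanded, D is a
  Dirichlet polynomial over the integers prod_p p^(v_p) <= (prod_p p)^(r N) = T^(o(1)),
  whose logarithms are well separated, so the mean value theorem gives
  int_0^T |D|^2 ~ T sum |coefficients|^2 for D and for each kernel with one prime removed.
  Comparing the two estimates bounds the measure of G below by T / (2 (r N + 1)^k).
  For t in G, complete multiplicativity gives |n^(it) - f n| <= delta log_2 n for every
  y-smooth n <= x, and the choice delta = 1 / (log x (log log T)^2), N ~ 4 / delta,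
  r ~ 2 log log T makes all the bounds fit.
\<close>

section \<open>Mean values of exponential sums\<close>

lemma prod_cis: "finite A \<Longrightarrow> (\<Prod>x\<in>A. cis (g x)) = cis (\<Sum>x\<in>A. g x)"
  by (induct A rule: finite_induct) (simp_all add: cis_mult)

lemma cis_has_integral:
  assumes "l \<noteq> 0" "0 \<le> T"
  shows "((\<lambda>t. cis (t * l)) has_integral (cis (T * l) - 1) / (\<i> * l)) {0..T}"
proof -
  have "((\<lambda>t. cis (t * l) / (\<i> * l)) has_vector_derivative cis (t * l)) (at t within {0..T})" for t
  proof -
    have "((\<lambda>t. cis (t * l)) has_derivative (\<lambda>h. (h * l) *\<^sub>R (\<i> * cis (t * l)))) (at t within {0..T})"
      by (auto intro!: derivative_eq_intros)
    then have "((\<lambda>t. cis (t * l)) has_vector_derivative cis (t * l) * (\<i> * l)) (at t within {0..T})"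
      by (simp add: has_vector_derivative_def scaleR_conv_of_real algebra_simps)
    then show ?thesis
      using has_vector_derivative_divide[where a = "\<i> * l"] assms(1) by fastforce
  qed
  then have "((\<lambda>t. cis (t * l)) has_integral cis (T * l) / (\<i> * l) - cis (0 * l) / (\<i> * l)) {0..T}"
    by (intro fundamental_theorem_of_calculus assms(2))
  then show ?thesis
    by (simp add: diff_divide_distrib)
qed

lemma norm_integral_cis_le:
  assumes "l \<noteq> 0" "0 \<le> T"
  shows "norm (integral {0..T} (\<lambda>t. cis (t * l))) \<le> 2 / \<bar>l\<bar>"
proof -
  have "norm (cis (T * l) - 1) \<le> 2"
    using norm_triangle_ineq4[of "cis (T * l)" 1] by simp
  then show ?thesis
    using integral_unique[OF cis_has_integral[OF assms]] assms(1)
    by (simp add: norm_divide norm_mult divide_right_mono)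
qed

lemma norm_sum_cis_squared:
  fixes c :: "'a \<Rightarrow> complex"
  shows "(norm (\<Sum>v\<in>V. c v * cis (t * \<omega> v)))\<^sup>2 =
         Re (\<Sum>v\<in>V. \<Sum>w\<in>V. c v * cnj (c w) * cis (t * (\<omega> v - \<omega> w)))"
proof -
  let ?F = "\<Sum>v\<in>V. c v * cis (t * \<omega> v)"
  have "complex_of_real ((norm ?F)\<^sup>2) = ?F * cnj ?F"
    by (rule complex_norm_square)
  also have "\<dots> = (\<Sum>v\<in>V. \<Sum>w\<in>V. c v * cnj (c w) * (cis (t * \<omega> v) * cis (- (t * \<omega> w))))"
    by (simp add: sum_product cis_cnj mult_ac)
  also have "\<dots> = (\<Sum>v\<in>V. \<Sum>w\<in>V. c v * cnj (c w) * cis (t * (\<omega> v - \<omega> w)))"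
    by (simp add: cis_mult right_diff_distrib)
  finally show ?thesis
    by (metis Re_complex_of_real)
qed

text \<open>A crude form of the Montgomery--Vaughan mean value theorem: for frequencies with
  spacing at least \<open>g\<close>, the off-diagonal terms contribute at most \<open>2 / g\<close> each.\<close>
lemma mean_square_sum_cis:
  fixes c :: "'a \<Rightarrow> complex" and \<omega> :: "'a \<Rightarrow> real"
  assumes "finite V" "0 \<le> T" "0 < g"
    and gap: "\<And>v w. v \<in> V \<Longrightarrow> w \<in> V \<Longrightarrow> v \<noteq> w \<Longrightarrow> g \<le> \<bar>\<omega> v - \<omega> w\<bar>"
  shows "\<exists>J. ((\<lambda>t. (norm (\<Sum>v\<in>V. c v * cis (t * \<omega> v)))\<^sup>2) has_integral J) {0..T} \<and>
             \<bar>J - T * (\<Sum>v\<in>V. (norm (c v))\<^sup>2)\<bar> \<le> 2 * (\<Sum>v\<in>V. norm (c v))\<^sup>2 / g"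
proof -
  define I where "I v w = integral {0..T} (\<lambda>t. cis (t * (\<omega> v - \<omega> w)))" for v w
  define off where "off = (\<Sum>v\<in>V. \<Sum>w\<in>V-{v}. c v * cnj (c w) * I v w)"
  have "((\<lambda>t. \<Sum>v\<in>V. \<Sum>w\<in>V. c v * cnj (c w) * cis (t * (\<omega> v - \<omega> w))) has_integral
          (\<Sum>v\<in>V. \<Sum>w\<in>V. c v * cnj (c w) * I v w)) {0..T}"
    unfolding I_def
    by (intro has_integral_sum has_integral_mult_right integrable_integral
          integrable_continuous_interval continuous_intros assms(1))
  from has_integral_linear[OF this bounded_linear_Re]
  have integral: "((\<lambda>t. (norm (\<Sum>v\<in>V. c v * cis (t * \<omega> v)))\<^sup>2) has_integral
                   Re (\<Sum>v\<in>V. \<Sum>w\<in>V. c v * cnj (c w) * I v w)) {0..T}"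
    by (simp add: o_def norm_sum_cis_squared)
  have "(\<Sum>v\<in>V. \<Sum>w\<in>V. c v * cnj (c w) * I v w) = (\<Sum>v\<in>V. c v * cnj (c v) * I v v) + off"
    unfolding off_def using assms(1) by (simp add: sum.remove sum.distrib)
  also have "(\<Sum>v\<in>V. c v * cnj (c v) * I v v) = of_real (T * (\<Sum>v\<in>V. (norm (c v))\<^sup>2))"
    using assms(2) by (simp add: I_def scaleR_conv_of_real sum_distrib_left mult.commute flip: complex_norm_square)
  finally have split: "Re (\<Sum>v\<in>V. \<Sum>w\<in>V. c v * cnj (c w) * I v w) =
                       T * (\<Sum>v\<in>V. (norm (c v))\<^sup>2) + Re off"
    by simp
  have "norm off \<le> (\<Sum>v\<in>V. \<Sum>w\<in>V-{v}. norm (c v) * norm (c w) * (2 / g))"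
    unfolding off_def
  proof (intro order.trans[OF norm_sum sum_mono] order.trans[OF norm_sum sum_mono])
    fix v w assume "v \<in> V" "w \<in> V - {v}"
    then have "g \<le> \<bar>\<omega> v - \<omega> w\<bar>"
      using gap by auto
    then have "norm (I v w) \<le> 2 / \<bar>\<omega> v - \<omega> w\<bar>"
      unfolding I_def using assms(2,3) by (intro norm_integral_cis_le) auto
    also have "\<dots> \<le> 2 / g"
      using \<open>g \<le> \<bar>\<omega> v - \<omega> w\<bar>\<close> assms(3) by (intro divide_left_mono) auto
    finally have "norm (I v w) \<le> 2 / g" .
    then show "norm (c v * cnj (c w) * I v w) \<le> norm (c v) * norm (c w) * (2 / g)"
      unfolding norm_mult complex_mod_cnj by (intro mult_left_mono) auto
  qed
  also have "\<dots> \<le> (\<Sum>v\<in>V. \<Sum>w\<in>V. norm (c v) * norm (c w) * (2 / g))"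
    using assms(1,3) by (intro sum_mono sum_mono2) auto
  also have "\<dots> = 2 * (\<Sum>v\<in>V. norm (c v))\<^sup>2 / g"
    by (simp add: power2_eq_square sum_distrib_left sum_distrib_right sum_divide_distrib mult_ac)
  finally have "\<bar>Re off\<bar> \<le> 2 * (\<Sum>v\<in>V. norm (c v))\<^sup>2 / g"
    using abs_Re_le_cmod[of off] by linarith
  then show ?thesis
    using integral split by auto
qed

section \<open>Powers of the Dirichlet kernel\<close>

definition geom_pow_coeff :: "nat \<Rightarrow> nat \<Rightarrow> nat \<Rightarrow> complex" where
  "geom_pow_coeff N r s = coeff ((\<Sum>j\<le>N. monom 1 j) ^ r) s"

lemma geom_pow_coeff_in_Nats: "geom_pow_coeff N r s \<in> \<nat>"
proof -
  have sum_in_Nats: "(\<And>x. x \<in> A \<Longrightarrow> h x \<in> \<nat>) \<Longrightarrow> sum h A \<in> \<nat>" for h :: "nat \<Rightarrow> complex" and A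
    by (induct A rule: infinite_finite_induct) auto
  have "coeff (\<Sum>j\<le>N. monom (1::complex) j) i \<in> \<nat>" for i
    unfolding coeff_sum by (intro sum_in_Nats) (simp add: coeff_monom)
  then show ?thesis
    unfolding geom_pow_coeff_def
    by (induct r arbitrary: s) (simp_all add: coeff_1 coeff_mult sum_in_Nats)
qed

lemma geom_pow_coeff_eq_norm: "geom_pow_coeff N r s = of_real (norm (geom_pow_coeff N r s))"
  using geom_pow_coeff_in_Nats[of N r s] by (auto elim!: Nats_cases)

lemma power_geom_sum_expand:
  fixes w :: complex
  shows "(\<Sum>j\<le>N. w ^ j) ^ r = (\<Sum>s\<le>r * N. geom_pow_coeff N r s * w ^ s)"
proof -
  let ?A = "\<Sum>j\<le>N. monom (1::complex) j"
  have "degree ?A \<le> N"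
    by (intro degree_sum_le) (auto intro: order.trans[OF degree_monom_le])
  then have "degree (?A ^ r) \<le> r * N"
    by (metis degree_power_le dual_order.trans mult.commute mult_le_mono1)
  then have "poly (?A ^ r) w = (\<Sum>s\<le>r * N. coeff (?A ^ r) s * w ^ s)"
    by (intro poly_altdef[THEN trans] sum.mono_neutral_left) (auto simp: coeff_eq_0)
  then show ?thesis
    by (simp add: geom_pow_coeff_def poly_sum poly_monom)
qed

definition geom_pow_sq_sum :: "nat \<Rightarrow> nat \<Rightarrow> real" where
  "geom_pow_sq_sum N r = (\<Sum>s\<le>r * N. (norm (geom_pow_coeff N r s))\<^sup>2)"

lemma sum_norm_geom_pow_coeff: "(\<Sum>s\<le>r * N. norm (geom_pow_coeff N r s)) = real (N + 1) ^ r"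
proof -
  have "complex_of_real (\<Sum>s\<le>r * N. norm (geom_pow_coeff N r s)) = (\<Sum>s\<le>r * N. geom_pow_coeff N r s)"
    by (subst (2) geom_pow_coeff_eq_norm) simp
  also have "\<dots> = of_nat ((N + 1) ^ r)"
    using power_geom_sum_expand[of 1 N r] by simp
  finally show ?thesis
    by (metis of_nat_power of_real_eq_iff of_real_of_nat_eq)
qed

text \<open>The lower bound is Cauchy--Schwarz over the \<open>r * N + 1\<close> coefficients.\<close>
lemma geom_pow_sq_sum_bounds:
  "real (N + 1) ^ (2 * r) / real (r * N + 1) \<le> geom_pow_sq_sum N r"
  "geom_pow_sq_sum N r \<le> real (N + 1) ^ (2 * r)"
  unfolding geom_pow_sq_sum_def
proof -
  have sq: "(\<Sum>s\<le>r * N. norm (geom_pow_coeff N r s))\<^sup>2 = real (N + 1) ^ (2 * r)"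
    unfolding sum_norm_geom_pow_coeff by (simp add: power_mult mult.commute)
  show "real (N + 1) ^ (2 * r) / real (r * N + 1) \<le> (\<Sum>s\<le>r * N. (norm (geom_pow_coeff N r s))\<^sup>2)"
    using sum_squared_le_sum_of_squares[of "\<lambda>s. norm (geom_pow_coeff N r s)" "{..r * N}"]
    unfolding sq by (simp add: pos_divide_le_eq del: of_nat_Suc)
  show "(\<Sum>s\<le>r * N. (norm (geom_pow_coeff N r s))\<^sup>2) \<le> real (N + 1) ^ (2 * r)"
  proof -
    have "(\<Sum>s\<le>r * N. (norm (geom_pow_coeff N r s))\<^sup>2) \<le>
          (\<Sum>s\<le>r * N. norm (geom_pow_coeff N r s) * (\<Sum>s'\<le>r * N. norm (geom_pow_coeff N r s')))"
      unfolding power2_eq_square by (intro sum_mono mult_left_mono member_le_sum) auto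
    then show ?thesis
      unfolding sq[symmetric] by (simp add: power2_eq_square sum_distrib_right)
  qed
qed

lemma norm_geom_sum_le:
  fixes w :: complex
  assumes "norm w = 1"
  shows "norm (\<Sum>j\<le>N. w ^ j) \<le> real (N + 1)"
  using norm_sum[of "\<lambda>j. w ^ j" "{..N}"] assms by (simp add: norm_power)

lemma norm_geom_sum_le_dist:
  fixes w :: complex
  assumes "norm w = 1" "w \<noteq> 1"
  shows "norm (\<Sum>j\<le>N. w ^ j) \<le> 2 / norm (w - 1)"
proof -
  have "norm (w ^ Suc N - 1) \<le> 2"
    using norm_triangle_ineq4[of "w ^ Suc N" 1] assms(1) by (simp add: norm_power norm_mult)
  then show ?thesis
    using geometric_sum[OF assms(2), of "Suc N"] assms(2)
    by (simp add: lessThan_Suc_atMost norm_divide divide_right_mono)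
qed

section \<open>The Kronecker kernel\<close>

lemma ln_nat_separation:
  fixes a b Q :: nat
  assumes "a \<noteq> b" "1 \<le> a" "1 \<le> b" "a \<le> Q" "b \<le> Q"
  shows "1 / real Q \<le> \<bar>ln (real a) - ln (real b)\<bar>"
proof -
  have "1 / real Q \<le> ln (real b) - ln (real a)" if "a < b" "1 \<le> a" "b \<le> Q" for a b :: nat
  proof -
    have "ln (real a / real b) \<le> real a / real b - 1"
      using that by (intro ln_le_minus_one) auto
    moreover have "real Q * (real a + 1) \<le> real Q * real b"
      using that by (intro mult_left_mono) auto
    then have "real a / real b - 1 \<le> - 1 / real Q"
      using that by (simp add: field_simps)
    ultimately show ?thesis
      using that by (simp add: ln_div)
  qed
  from this[of a b] this[of b a] assms show ?thesis
    by (cases "a < b") auto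
qed

text \<open>By unique factorisation, distinct exponent vectors give distinct integers
  \<open>\<Prod>p\<in>P. p ^ v p \<le> (\<Prod>P) ^ K\<close>.\<close>
lemma sum_ln_prime_powers_separated:
  fixes v w :: "nat \<Rightarrow> nat"
  assumes P: "finite P" "\<And>p. p \<in> P \<Longrightarrow> prime p"
    and vw: "v \<in> PiE P (\<lambda>_. {..K})" "w \<in> PiE P (\<lambda>_. {..K})" "v \<noteq> w"
  shows "1 / real ((\<Prod>P) ^ K) \<le> \<bar>(\<Sum>p\<in>P. v p * ln (real p)) - (\<Sum>p\<in>P. w p * ln (real p))\<bar>"
proof -
  define n where "n u = (\<Prod>p\<in>P. p ^ u p)" for u
  have p_pos: "0 < p" if "p \<in> P" for p
    using P(2)[OF that] prime_gt_0_nat by blast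
  have ln_n: "(\<Sum>p\<in>P. u p * ln (real p)) = ln (real (n u))" for u
    unfolding n_def using P(1) p_pos by (simp add: ln_prod ln_realpow)
  have n_range: "1 \<le> n u \<and> n u \<le> (\<Prod>P) ^ K" if "u \<in> PiE P (\<lambda>_. {..K})" for u
  proof
    show "1 \<le> n u"
      unfolding n_def using p_pos by (intro prod_ge_1) (simp add: Suc_le_eq)
    have "n u \<le> (\<Prod>p\<in>P. p ^ K)"
      unfolding n_def using that p_pos
      by (intro prod_mono conjI power_increasing) (auto simp: PiE_iff Suc_le_eq)
    then show "n u \<le> (\<Prod>P) ^ K"
      by (simp add: prod_power_distrib)
  qed
  have "\<exists>q\<in>P. v q \<noteq> w q"
    using vw by (meson PiE_ext)
  then obtain q where q: "q \<in> P" "v q \<noteq> w q" ..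
  have "multiplicity q (n u) = u q" for u
    unfolding n_def using multiplicity_prod_prime_powers[OF P(1) P(2) P(2)[OF q(1)]] q(1) by simp
  then have "n v \<noteq> n w"
    using q(2) by metis
  then show ?thesis
    unfolding ln_n using n_range[OF vw(1)] n_range[OF vw(2)] by (intro ln_nat_separation) auto
qed

lemma nit_eq_cis: "nit n t = cis (t * ln (real n))"
  by (simp add: nit_def cis_conv_exp)

lemma norm_nit [simp]: "norm (nit n t) = 1"
  by (simp add: nit_eq_cis)

definition kronecker_kernel :: "(nat \<Rightarrow> complex) \<Rightarrow> nat \<Rightarrow> nat \<Rightarrow> nat set \<Rightarrow> real \<Rightarrow> complex" where
  "kronecker_kernel f N r P t = (\<Prod>p\<in>P. (\<Sum>j\<le>N. (nit p t * cnj (f p)) ^ j) ^ r)"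

lemma kronecker_kernel_expand:
  assumes "finite P"
  shows "kronecker_kernel f N r P t = (\<Sum>v\<in>PiE P (\<lambda>_. {..r * N}).
           (\<Prod>p\<in>P. geom_pow_coeff N r (v p) * cnj (f p) ^ v p) * cis (t * (\<Sum>p\<in>P. v p * ln (real p))))"
proof -
  have "kronecker_kernel f N r P t =
        (\<Prod>p\<in>P. \<Sum>s\<le>r * N. geom_pow_coeff N r s * cnj (f p) ^ s * cis (t * (s * ln (real p))))"
    unfolding kronecker_kernel_def power_geom_sum_expand nit_eq_cis
    by (simp add: power_mult_distrib Complex.DeMoivre mult_ac)
  also have "\<dots> = (\<Sum>v\<in>PiE P (\<lambda>_. {..r * N}).
                    \<Prod>p\<in>P. geom_pow_coeff N r (v p) * cnj (f p) ^ v p * cis (t * (v p * ln (real p))))"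
    using assms by (intro prod_sum_PiE) auto
  also have "\<dots> = (\<Sum>v\<in>PiE P (\<lambda>_. {..r * N}).
           (\<Prod>p\<in>P. geom_pow_coeff N r (v p) * cnj (f p) ^ v p) * cis (t * (\<Sum>p\<in>P. v p * ln (real p))))"
    using assms by (simp add: prod.distrib prod_cis sum_distrib_left)
  finally show ?thesis .
qed

lemma mean_square_kronecker_kernel:
  assumes P: "finite P" "\<And>p. p \<in> P \<Longrightarrow> prime p" and f_norm: "\<And>p. p \<in> P \<Longrightarrow> norm (f p) = 1"
    and "0 \<le> T"
  shows "\<exists>J. ((\<lambda>t. (norm (kronecker_kernel f N r P t))\<^sup>2) has_integral J) {0..T} \<and>
             \<bar>J - T * geom_pow_sq_sum N r ^ card P\<bar>
               \<le> 2 * real (N + 1) ^ (2 * r * card P) * real ((\<Prod>P) ^ (r * N))"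
proof -
  define V where "V = PiE P (\<lambda>_. {..r * N})"
  define c where "c v = (\<Prod>p\<in>P. geom_pow_coeff N r (v p) * cnj (f p) ^ v p)" for v
  define \<omega> where "\<omega> v = (\<Sum>p\<in>P. v p * ln (real p))" for v :: "nat \<Rightarrow> nat"
  define Q where "Q = (\<Prod>P) ^ (r * N)"
  have "finite V"
    unfolding V_def using P(1) by (intro finite_PiE) auto
  moreover have "0 < Q"
    unfolding Q_def using P(2) by (simp add: prod_pos prime_gt_0_nat)
  moreover have "1 / real Q \<le> \<bar>\<omega> v - \<omega> w\<bar>" if "v \<in> V" "w \<in> V" "v \<noteq> w" for v w
    using sum_ln_prime_powers_separated[OF P] that unfolding V_def Q_def \<omega>_def by blast
  ultimately obtain J where J: "((\<lambda>t. (norm (\<Sum>v\<in>V. c v * cis (t * \<omega> v)))\<^sup>2) has_integral J) {0..T}"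
    and J_bound: "\<bar>J - T * (\<Sum>v\<in>V. (norm (c v))\<^sup>2)\<bar> \<le> 2 * (\<Sum>v\<in>V. norm (c v))\<^sup>2 / (1 / real Q)"
    using mean_square_sum_cis[of V T "1 / real Q" \<omega> c] \<open>0 \<le> T\<close> by auto
  have norm_c: "norm (c v) = (\<Prod>p\<in>P. norm (geom_pow_coeff N r (v p)))" for v
    unfolding c_def prod_norm[symmetric] using f_norm by (simp add: norm_mult norm_power)
  have "(\<Sum>v\<in>V. (norm (c v))\<^sup>2) = (\<Sum>v\<in>V. \<Prod>p\<in>P. (norm (geom_pow_coeff N r (v p)))\<^sup>2)"
    by (simp add: norm_c prod_power_distrib)
  also have "\<dots> = (\<Prod>p\<in>P. \<Sum>s\<le>r * N. (norm (geom_pow_coeff N r s))\<^sup>2)"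
    unfolding V_def using P(1) by (intro prod_sum_PiE[symmetric]) auto
  finally have sum_sq: "(\<Sum>v\<in>V. (norm (c v))\<^sup>2) = geom_pow_sq_sum N r ^ card P"
    by (simp add: geom_pow_sq_sum_def)
  have "(\<Sum>v\<in>V. norm (c v)) = (\<Prod>p\<in>P. \<Sum>s\<le>r * N. norm (geom_pow_coeff N r s))"
    unfolding norm_c V_def using P(1) by (intro prod_sum_PiE[symmetric]) auto
  then have "(\<Sum>v\<in>V. norm (c v))\<^sup>2 = real (N + 1) ^ (2 * r * card P)"
    unfolding sum_norm_geom_pow_coeff by (simp add: power_mult[symmetric] mult_ac)
  moreover have "kronecker_kernel f N r P t = (\<Sum>v\<in>V. c v * cis (t * \<omega> v))" for t
    unfolding kronecker_kernel_expand[OF P(1)] V_def c_def \<omega>_def ..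
  ultimately show ?thesis
    using J J_bound unfolding sum_sq Q_def by auto
qed

lemma mean_square_kronecker_kernel_remove_le:
  assumes P: "finite P" "\<And>p. p \<in> P \<Longrightarrow> prime p" and f_norm: "\<And>p. p \<in> P \<Longrightarrow> norm (f p) = 1"
    and "0 \<le> T" "p \<in> P"
  shows "\<exists>J. ((\<lambda>t. (norm (kronecker_kernel f N r (P - {p}) t))\<^sup>2) has_integral J) {0..T} \<and>
             J \<le> T * geom_pow_sq_sum N r ^ (card P - 1)
                  + 2 * real (N + 1) ^ (2 * r * (card P - 1)) * real ((\<Prod>P) ^ (r * N))"
proof -
  have "\<Prod>(P - {p}) dvd \<Prod>P"
    using P(1) by (intro prod_dvd_prod_subset) auto
  moreover have "0 < \<Prod>P"
    using P(2) by (intro prod_pos) (simp add: prime_gt_0_nat)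
  ultimately have "\<Prod>(P - {p}) \<le> \<Prod>P"
    by (rule dvd_imp_le)
  then have "real ((\<Prod>(P - {p})) ^ (r * N)) \<le> real ((\<Prod>P) ^ (r * N))"
    unfolding of_nat_le_iff by (rule power_mono) simp
  then have Q_le: "2 * real (N + 1) ^ (2 * r * (card P - 1)) * real ((\<Prod>(P - {p})) ^ (r * N))
                   \<le> 2 * real (N + 1) ^ (2 * r * (card P - 1)) * real ((\<Prod>P) ^ (r * N))"
    by (rule mult_left_mono) simp
  have "finite (P - {p})" "card (P - {p}) = card P - 1"
    using P(1) \<open>p \<in> P\<close> by simp_all
  then obtain J where J: "((\<lambda>t. (norm (kronecker_kernel f N r (P - {p}) t))\<^sup>2) has_integral J) {0..T}"
    and J_bound: "\<bar>J - T * geom_pow_sq_sum N r ^ (card P - 1)\<bar>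
           \<le> 2 * real (N + 1) ^ (2 * r * (card P - 1)) * real ((\<Prod>(P - {p})) ^ (r * N))"
    using mean_square_kronecker_kernel[of "P - {p}" f T N r] P(2) f_norm \<open>0 \<le> T\<close> by auto
  show ?thesis
    using abs_le_D1[OF J_bound] Q_le by (intro exI[of _ J] conjI J) linarith
qed

lemma norm_kronecker_kernel_le:
  assumes "finite P" "\<And>p. p \<in> P \<Longrightarrow> norm (f p) = 1"
  shows "norm (kronecker_kernel f N r P t) \<le> real (N + 1) ^ (r * card P)"
proof -
  have "norm (kronecker_kernel f N r P t) \<le> (\<Prod>p\<in>P. real (N + 1) ^ r)"
    unfolding kronecker_kernel_def prod_norm[symmetric] norm_power
    using assms(2) by (intro prod_mono conjI power_mono norm_geom_sum_le) (auto simp: norm_mult)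
  then show ?thesis
    by (simp add: power_mult)
qed

section \<open>The set of good \<open>t\<close>\<close>

definition near_set :: "(nat \<Rightarrow> complex) \<Rightarrow> nat set \<Rightarrow> real \<Rightarrow> real \<Rightarrow> real set" where
  "near_set f P \<delta> T = {t \<in> {0..T}. \<forall>p\<in>P. norm (nit p t - f p) \<le> \<delta>}"

lemma compact_near_set: "compact (near_set f P \<delta> T)"
proof -
  have "near_set f P \<delta> T = {0..T} \<inter> (\<Inter>p\<in>P. {t. norm (nit p t - f p) \<le> \<delta>})"
    by (auto simp: near_set_def)
  moreover have "closed {t. norm (nit p t - f p) \<le> \<delta>}" for p
    unfolding nit_eq_cis by (intro closed_Collect_le continuous_intros)
  ultimately show ?thesis
    by (simp add: compact_Int_closed closed_INT)
qed

lemma has_integral_indicator_measure: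
  assumes "S \<in> lmeasurable" "S \<subseteq> A"
  shows "(indicator S has_integral measure lebesgue S) A"
proof -
  have "indicator S = (\<lambda>t. if t \<in> A then indicator S t else 0 :: real)"
    using assms(2) by (auto simp: indicator_def fun_eq_iff)
  then show ?thesis
    using assms(1) by (metis lmeasurable_iff_has_integral has_integral_restrict_UNIV)
qed

text \<open>Off the near set some factor \<open>p\<close> of the kernel is a Dirichlet kernel evaluated
  at a point at distance \<open>> \<delta>\<close> from \<open>1\<close>, hence at most \<open>(2 / \<delta>) ^ r\<close> in modulus.\<close>
lemma kronecker_kernel_sq_le:
  assumes "finite P" "\<And>p. p \<in> P \<Longrightarrow> norm (f p) = 1" "0 < \<delta>" "t \<in> {0..T}"
  shows "(norm (kronecker_kernel f N r P t))\<^sup>2 \<le>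
           real (N + 1) ^ (2 * r * card P) * indicator (near_set f P \<delta> T) t +
           (\<Sum>p\<in>P. (2 / \<delta>) ^ (2 * r) * (norm (kronecker_kernel f N r (P - {p}) t))\<^sup>2)"
proof (cases "t \<in> near_set f P \<delta> T")
  case True
  have "(norm (kronecker_kernel f N r P t))\<^sup>2 \<le> (real (N + 1) ^ (r * card P))\<^sup>2"
    using norm_kronecker_kernel_le[OF assms(1,2)] by (intro power_mono) auto
  moreover have "0 \<le> (\<Sum>p\<in>P. (2 / \<delta>) ^ (2 * r) * (norm (kronecker_kernel f N r (P - {p}) t))\<^sup>2)"
    using assms(3) by (intro sum_nonneg) auto
  ultimately show ?thesis
    using True by (simp add: power_mult[symmetric] mult_ac)
next
  case False
  then obtain p where p: "p \<in> P" and far: "\<delta> < norm (nit p t - f p)"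
    using assms(4) by (auto simp: near_set_def)
  define w where "w = nit p t * cnj (f p)"
  have "f p * cnj (f p) = 1"
    using assms(2)[OF p] by (simp flip: complex_norm_square)
  then have "w - 1 = (nit p t - f p) * cnj (f p)"
    by (simp add: w_def algebra_simps)
  then have w_far: "\<delta> < norm (w - 1)"
    using far assms(2)[OF p] by (simp add: norm_mult)
  have "norm w = 1"
    using assms(2)[OF p] by (simp add: w_def norm_mult)
  then have "norm (\<Sum>j\<le>N. w ^ j) \<le> 2 / norm (w - 1)"
    using w_far assms(3) by (intro norm_geom_sum_le_dist) auto
  also have "\<dots> \<le> 2 / \<delta>"
    using w_far assms(3) by (intro divide_left_mono) (auto simp: zero_less_mult_iff)
  finally have "(norm (\<Sum>j\<le>N. w ^ j)) ^ (2 * r) \<le> (2 / \<delta>) ^ (2 * r)"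
    by (intro power_mono) auto
  moreover have "kronecker_kernel f N r P t = (\<Sum>j\<le>N. w ^ j) ^ r * kronecker_kernel f N r (P - {p}) t"
    unfolding kronecker_kernel_def w_def using assms(1) p by (simp add: prod.remove)
  ultimately have "(norm (kronecker_kernel f N r P t))\<^sup>2 \<le>
                   (2 / \<delta>) ^ (2 * r) * (norm (kronecker_kernel f N r (P - {p}) t))\<^sup>2"
    by (simp add: norm_mult norm_power power_mult_distrib power_mult[symmetric] mult_right_mono mult.commute)
  also have "\<dots> \<le> (\<Sum>q\<in>P. (2 / \<delta>) ^ (2 * r) * (norm (kronecker_kernel f N r (P - {q}) t))\<^sup>2)"
    using assms(1,3) p by (intro member_le_sum) auto
  finally show ?thesis
    using False by simp
qed

lemma mean_square_kronecker_kernel_le_near_set: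
  assumes "finite P" "\<And>p. p \<in> P \<Longrightarrow> norm (f p) = 1" "0 < \<delta>"
    and J: "((\<lambda>t. (norm (kronecker_kernel f N r P t))\<^sup>2) has_integral J) {0..T}"
    and J': "\<And>p. p \<in> P \<Longrightarrow> ((\<lambda>t. (norm (kronecker_kernel f N r (P - {p}) t))\<^sup>2) has_integral J' p) {0..T}"
  shows "J \<le> real (N + 1) ^ (2 * r * card P) * measure lebesgue (near_set f P \<delta> T)
               + (\<Sum>p\<in>P. (2 / \<delta>) ^ (2 * r) * J' p)"
proof -
  have "near_set f P \<delta> T \<in> lmeasurable" "near_set f P \<delta> T \<subseteq> {0..T}"
    by (simp_all add: lmeasurable_compact compact_near_set) (auto simp: near_set_def)
  then have "((\<lambda>t. real (N + 1) ^ (2 * r * card P) * indicator (near_set f P \<delta> T) t +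
                   (\<Sum>p\<in>P. (2 / \<delta>) ^ (2 * r) * (norm (kronecker_kernel f N r (P - {p}) t))\<^sup>2)) has_integral
              real (N + 1) ^ (2 * r * card P) * measure lebesgue (near_set f P \<delta> T)
               + (\<Sum>p\<in>P. (2 / \<delta>) ^ (2 * r) * J' p)) {0..T}"
    using J' assms(1)
    by (intro has_integral_add has_integral_mult_right has_integral_sum has_integral_indicator_measure) auto
  then show ?thesis
    using kronecker_kernel_sq_le[OF assms(1-3)] by (rule has_integral_le[OF J])
qed

lemma dirichlet_weight_le:
  assumes "0 < \<delta>" "4 / \<delta> \<le> real (N + 1)" "8 * real k * real (r * N + 1) \<le> 4 ^ r"
  shows "real k * (2 / \<delta>) ^ (2 * r) \<le> geom_pow_sq_sum N r / 8"
proof -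
  have "(2 / \<delta>) ^ (2 * r) \<le> (real (N + 1) / 2) ^ (2 * r)"
    using assms(1,2) by (intro power_mono) (auto simp: field_simps)
  also have "\<dots> = real (N + 1) ^ (2 * r) / 4 ^ r"
    by (simp add: power_divide power_mult)
  also have "\<dots> \<le> real (r * N + 1) * geom_pow_sq_sum N r / 4 ^ r"
  proof -
    have "0 < 1 + real r * real N"
      by (simp add: add_pos_nonneg)
    then show ?thesis
      using geom_pow_sq_sum_bounds(1)[of N r] by (simp add: pos_divide_le_eq divide_right_mono mult.commute)
  qed
  finally have "real k * (2 / \<delta>) ^ (2 * r) \<le> real k * (real (r * N + 1) * geom_pow_sq_sum N r / 4 ^ r)"
    by (rule mult_left_mono) simp
  also have "\<dots> = (8 * real k * real (r * N + 1)) * geom_pow_sq_sum N r / (8 * 4 ^ r)"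
    by simp
  also have "\<dots> \<le> 4 ^ r * geom_pow_sq_sum N r / (8 * 4 ^ r)"
    using assms(3) by (intro divide_right_mono mult_right_mono) (auto simp: geom_pow_sq_sum_def sum_nonneg)
  finally show ?thesis
    by simp
qed

text \<open>The bookkeeping behind \<open>measure_near_set_ge\<close>: \<open>J\<close> is the mean square of the kernel,
  \<open>G\<close> the measure of the near set, \<open>M = N + 1\<close>, \<open>R = r N + 1\<close>, \<open>m = geom_pow_sq_sum N r\<close>,
  \<open>Q = (\<Prod>P) ^ (r N)\<close> and \<open>K = card P (2 / \<delta>) ^ (2 r)\<close>.\<close>
lemma kronecker_measure_arith:
  fixes G J T m M R Q K :: real and k r :: nat
  assumes "1 \<le> k" "0 < M" "0 < R" "0 \<le> Q" "0 \<le> T" "0 \<le> K"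
    and m: "M ^ (2 * r) / R \<le> m" "m \<le> M ^ (2 * r)" and K: "K \<le> m / 8"
    and J_lower: "T * m ^ k - 2 * M ^ (2 * r * k) * Q \<le> J"
    and J_upper: "J \<le> M ^ (2 * r * k) * G + K * (T * m ^ (k - 1) + 2 * M ^ (2 * r * (k - 1)) * Q)"
    and TQ: "8 * Q * R ^ k \<le> T"
  shows "T / (2 * R ^ k) \<le> G"
proof -
  define X where "X = M ^ (2 * r * k)"
  have "0 < X"
    unfolding X_def using assms(2) by simp
  have "0 < M ^ (2 * r) / R"
    using assms(2,3) by simp
  then have "0 < m"
    using m(1) by linarith
  have "2 * r + 2 * r * (k - 1) = 2 * r * k"
    using assms(1) by (cases k) auto
  then have X_split: "M ^ (2 * r) * M ^ (2 * r * (k - 1)) = X"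
    unfolding X_def by (simp flip: power_add)
  have m_split: "m * m ^ (k - 1) = m ^ k"
    using assms(1) by (cases k) auto
  have "m * M ^ (2 * r * (k - 1)) \<le> X"
    unfolding X_split[symmetric] using m(2) assms(2) by (intro mult_right_mono) auto
  have "0 \<le> T * m ^ (k - 1) + 2 * M ^ (2 * r * (k - 1)) * Q"
    using assms(2,4,5) \<open>0 < m\<close> by simp
  then have "K * (T * m ^ (k - 1) + 2 * M ^ (2 * r * (k - 1)) * Q) \<le>
             m / 8 * (T * m ^ (k - 1) + 2 * M ^ (2 * r * (k - 1)) * Q)"
    by (rule mult_right_mono[OF K])
  also have "\<dots> = T * m ^ k / 8 + m * M ^ (2 * r * (k - 1)) * Q / 4"
    by (simp add: algebra_simps flip: m_split)
  also have "\<dots> \<le> T * m ^ k / 8 + X * Q / 4"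
    using \<open>m * M ^ (2 * r * (k - 1)) \<le> X\<close> assms(4)
    by (intro add_left_mono divide_right_mono mult_right_mono) auto
  finally have "K * (T * m ^ (k - 1) + 2 * M ^ (2 * r * (k - 1)) * Q) \<le> T * m ^ k / 8 + X * Q / 4" .
  moreover have "X / R ^ k \<le> m ^ k"
    using power_mono[OF m(1), of k] assms(2,3) unfolding X_def
    by (simp add: power_divide power_mult)
  then have "T * (X / R ^ k) \<le> T * m ^ k"
    using assms(5) by (rule mult_left_mono)
  ultimately have "X * (7 / 8 * (T / R ^ k) - 9 / 4 * Q) \<le> X * G"
    using J_lower J_upper unfolding X_def[symmetric] by (simp add: algebra_simps)
  then have "7 / 8 * (T / R ^ k) - 9 / 4 * Q \<le> G"
    using \<open>0 < X\<close> by simp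
  moreover have "8 * Q \<le> T / R ^ k"
    using TQ assms(3) by (simp add: field_simps)
  ultimately show ?thesis
    using assms(3,5) by (simp add: field_simps)
qed

lemma measure_near_set_ge:
  assumes P: "finite P" "\<And>p. p \<in> P \<Longrightarrow> prime p" and f_norm: "\<And>p. p \<in> P \<Longrightarrow> norm (f p) = 1"
    and "0 \<le> T" "0 < \<delta>"
    and N: "4 / \<delta> \<le> real (N + 1)"
    and r: "8 * real (card P) * real (r * N + 1) \<le> 4 ^ r"
    and T: "8 * real ((\<Prod>P) ^ (r * N)) * real (r * N + 1) ^ card P \<le> T"
  shows "T / (2 * real (r * N + 1) ^ card P) \<le> measure lebesgue (near_set f P \<delta> T)"
proof (cases "P = {}")
  case True
  then have "near_set f P \<delta> T = {0..T}"
    by (auto simp: near_set_def)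
  then show ?thesis
    using True \<open>0 \<le> T\<close> by simp
next
  case False
  define k M m Q B where "k = card P" and "M = real (N + 1)" and "m = geom_pow_sq_sum N r"
    and "Q = real ((\<Prod>P) ^ (r * N))" and "B = (2 / \<delta>) ^ (2 * r)"
  let ?D = "\<lambda>P t. (norm (kronecker_kernel f N r P t))\<^sup>2"
  obtain J where J: "(?D P has_integral J) {0..T}" and J_bound: "\<bar>J - T * m ^ k\<bar> \<le> 2 * M ^ (2 * r * k) * Q"
    using mean_square_kronecker_kernel[of P f T N r] P f_norm \<open>0 \<le> T\<close> unfolding k_def M_def m_def Q_def by blast
  have "\<exists>J'. (?D (P - {p}) has_integral J') {0..T} \<and> J' \<le> T * m ^ (k - 1) + 2 * M ^ (2 * r * (k - 1)) * Q"
    if "p \<in> P" for p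
    using mean_square_kronecker_kernel_remove_le[of P f T p N r] P f_norm \<open>0 \<le> T\<close> that
    unfolding k_def M_def m_def Q_def by blast
  then obtain J' where J': "\<And>p. p \<in> P \<Longrightarrow> (?D (P - {p}) has_integral J' p) {0..T}"
    and J'_bound: "\<And>p. p \<in> P \<Longrightarrow> J' p \<le> T * m ^ (k - 1) + 2 * M ^ (2 * r * (k - 1)) * Q"
    by metis
  have "J \<le> M ^ (2 * r * k) * measure lebesgue (near_set f P \<delta> T) + (\<Sum>p\<in>P. B * J' p)"
    unfolding M_def k_def B_def using mean_square_kronecker_kernel_le_near_set[OF P(1) f_norm \<open>0 < \<delta>\<close> J J'] .
  also have "(\<Sum>p\<in>P. B * J' p) \<le> real k * B * (T * m ^ (k - 1) + 2 * M ^ (2 * r * (k - 1)) * Q)"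
    using J'_bound sum_mono[of P "\<lambda>p. B * J' p"] \<open>0 < \<delta>\<close> unfolding k_def B_def
    by (simp add: mult_left_mono sum_bounded_above mult.assoc)
  finally have "J \<le> M ^ (2 * r * k) * measure lebesgue (near_set f P \<delta> T)
                     + real k * B * (T * m ^ (k - 1) + 2 * M ^ (2 * r * (k - 1)) * Q)"
    by simp
  moreover have "1 \<le> k" "0 < M" "0 \<le> real k * B"
    using False P(1) \<open>0 < \<delta>\<close> by (auto simp: k_def M_def B_def Suc_le_eq card_gt_0_iff)
  moreover have "0 < real (r * N + 1)" "0 \<le> Q"
    unfolding Q_def by (simp_all only: of_nat_0_less_iff of_nat_0_le_iff)
  moreover have "real k * B \<le> m / 8"
    unfolding k_def B_def m_def by (rule dirichlet_weight_le[OF \<open>0 < \<delta>\<close> N r])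
  moreover have "T * m ^ k - 2 * M ^ (2 * r * k) * Q \<le> J"
    using J_bound by linarith
  ultimately show ?thesis
    using geom_pow_sq_sum_bounds[of N r] \<open>0 \<le> T\<close> T unfolding k_def M_def m_def Q_def
    by (intro kronecker_measure_arith[where J = J and K = "real (card P) * B"]) auto
qed

section \<open>From primes to smooth numbers\<close>

lemma norm_nit_sub_le_log:
  assumes f: "completely_multiplicative f" "\<And>p. prime p \<Longrightarrow> norm (f p) = 1" and "0 \<le> \<delta>"
    and "0 < n" and near: "\<forall>p\<in>prime_factors n. norm (nit p t - f p) \<le> \<delta>"
  shows "norm (nit n t - f n) \<le> \<delta> * log 2 (real n)"
  using \<open>0 < n\<close> near
proof (induction n rule: less_induct)
  case (less n)
  show ?case
  proof (cases "n = 1")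
    case True
    then show ?thesis
      using f(1) by (simp add: completely_multiplicative_def nit_def)
  next
    case False
    then obtain p where p: "prime p" "p dvd n"
      using prime_factor_nat by blast
    then obtain m where n: "n = p * m"
      by (auto elim: dvdE)
    have "0 < m" "m < n" "2 * m \<le> n"
      using less.prems(1) n prime_ge_2_nat[OF p(1)] by (auto simp: mult_less_cancel2)
    have "prime_factors m \<subseteq> prime_factors n"
      using \<open>0 < m\<close> n p(1) by (intro dvd_prime_factors) auto
    then have IH: "norm (nit m t - f m) \<le> \<delta> * log 2 (real m)"
      using less.IH[OF \<open>m < n\<close> \<open>0 < m\<close>] less.prems(2) by blast
    have "norm (nit p t - f p) \<le> \<delta>"
      using less.prems p by (simp add: in_prime_factors_iff)
    have "nit n t - f n = (nit p t - f p) * nit m t + f p * (nit m t - f m)"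
      using f(1) p(1) \<open>0 < m\<close> unfolding n completely_multiplicative_def nit_def
      by (simp add: prime_gt_0_nat ln_mult distrib_left exp_add algebra_simps)
    then have "norm (nit n t - f n) \<le> norm (nit p t - f p) + norm (nit m t - f m)"
      using norm_triangle_ineq[of "(nit p t - f p) * nit m t" "f p * (nit m t - f m)"] f(2)[OF p(1)]
      by (simp add: norm_mult)
    also have "\<dots> \<le> \<delta> * log 2 (2 * real m)"
      using IH \<open>norm (nit p t - f p) \<le> \<delta>\<close> \<open>0 < m\<close> by (simp add: log_mult distrib_left)
    also have "\<dots> \<le> \<delta> * log 2 (real n)"
      using \<open>2 * m \<le> n\<close> \<open>0 < m\<close> \<open>0 \<le> \<delta>\<close> by (intro mult_left_mono) auto
    finally show ?thesis .
  qed
qed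

lemma norm_smooth_sum_diff_le:
  assumes f: "completely_multiplicative f" "\<And>p. prime p \<Longrightarrow> norm (f p) = 1" and "0 \<le> \<delta>"
    and near: "\<And>p. prime p \<Longrightarrow> real p \<le> x \<Longrightarrow> real p \<le> y \<Longrightarrow> norm (nit p t - f p) \<le> \<delta>"
  shows "norm ((\<Sum>n\<in>{n. real n \<le> x \<and> n \<in> smooth y}. nit n t) - (\<Sum>n\<in>{n. real n \<le> x \<and> n \<in> smooth y}. f n))
           \<le> \<delta> * log 2 x * real (Psi x y)"
proof -
  define A where "A = {n. real n \<le> x \<and> n \<in> smooth y}"
  have "norm (nit n t - f n) \<le> \<delta> * log 2 x" if "n \<in> A" for n
  proof -
    have "0 < n" "real n \<le> x" "\<forall>p\<in>prime_factors n. real p \<le> y"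
      using that by (auto simp: A_def smooth_def)
    moreover have "real p \<le> real n" if "p \<in> prime_factors n" for p
      using that \<open>0 < n\<close> by (auto intro: dvd_imp_le simp: in_prime_factors_iff)
    ultimately have "norm (nit n t - f n) \<le> \<delta> * log 2 (real n)"
      using near by (intro norm_nit_sub_le_log[OF f \<open>0 \<le> \<delta>\<close>]) force+
    also have "\<dots> \<le> \<delta> * log 2 x"
      using \<open>0 < n\<close> \<open>real n \<le> x\<close> \<open>0 \<le> \<delta>\<close> by (intro mult_left_mono) auto
    finally show ?thesis .
  qed
  then have "norm (\<Sum>n\<in>A. nit n t - f n) \<le> (\<Sum>n\<in>A. \<delta> * log 2 x)"
    by (intro order.trans[OF norm_sum sum_mono])
  then show ?thesis
    unfolding A_def Psi_def by (simp add: sum_subtractf mult.commute)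
qed

lemma smooth_sum_diff_le_near_set:
  fixes f :: "nat \<Rightarrow> complex" and x :: real
  assumes f: "completely_multiplicative f" "\<forall>n>0. norm (f n) = 1" and "2 \<le> x"
    and t: "t \<in> near_set f {p. prime p \<and> real p \<le> x \<and> real p \<le> y} (1 / (ln x * L\<^sup>2)) T"
  shows "norm ((\<Sum>n\<in>{n. real n \<le> x \<and> n \<in> smooth y}. nit n t) - (\<Sum>n\<in>{n. real n \<le> x \<and> n \<in> smooth y}. f n))
           \<le> 2 * real (Psi x y) / L\<^sup>2"
proof -
  have "0 < ln x"
    using \<open>2 \<le> x\<close> by simp
  then have "norm ((\<Sum>n\<in>{n. real n \<le> x \<and> n \<in> smooth y}. nit n t) - (\<Sum>n\<in>{n. real n \<le> x \<and> n \<in> smooth y}. f n))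
               \<le> 1 / (ln x * L\<^sup>2) * log 2 x * real (Psi x y)"
    using f(2) t by (intro norm_smooth_sum_diff_le[OF f(1)]) (auto simp: near_set_def prime_gt_0_nat)
  also have "1 / (ln x * L\<^sup>2) * log 2 x = 1 / (ln 2 * L\<^sup>2)"
    using \<open>0 < ln x\<close> by (simp add: log_def)
  also have "\<dots> \<le> 2 / L\<^sup>2"
    using ln2_ge_two_thirds by (cases "L = 0") (simp_all add: field_simps)
  finally show ?thesis
    by (simp add: mult_right_mono)
qed

lemma card_primes_le:
  fixes y :: real
  assumes "0 \<le> y"
  shows "finite {p. prime p \<and> real p \<le> y}" "real (card {p. prime p \<and> real p \<le> y}) \<le> y"
proof -
  have "{p. prime p \<and> real p \<le> y} \<subseteq> {1..nat \<lfloor>y\<rfloor>}"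
    using prime_ge_1_nat by (auto simp: le_nat_floor nat_le_iff le_floor_iff)
  then show "finite {p. prime p \<and> real p \<le> y}" "real (card {p. prime p \<and> real p \<le> y}) \<le> y"
    using card_mono[OF _ \<open>_ \<subseteq> _\<close>] assms by (auto intro: finite_subset) linarith
qed

section \<open>Choice of parameters\<close>

text \<open>The inequalities in \<open>L = log log T\<close> needed to choose the parameters of the kernel;
  each holds for all large \<open>L\<close>.\<close>
definition large_scale :: "real \<Rightarrow> bool" where
  "large_scale L \<longleftrightarrow> 2 \<le> L \<and> 16 * L ^ 3 * exp (L / 2) \<le> exp L \<and>
     ln 8 + 16 * exp L / L ^ 4 \<le> exp L \<and> ln 2 + 2 * exp L / L ^ 7 \<le> exp L / L ^ 2 \<and>
     8 * (2 * exp L / L ^ 8) * (16 * L ^ 3 * exp (L / 2)) \<le> exp (2 * L)"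

lemma eventually_large_scale: "\<forall>\<^sub>F L in at_top. large_scale L"
  unfolding large_scale_def by (intro eventually_conj; real_asymp)

lemma ceiling_degree_le:
  fixes L l :: real
  assumes "2 \<le> L" "1 / 2 \<le> l"
  shows "real (nat \<lceil>2 * L\<rceil> * nat \<lceil>4 * l * L\<^sup>2\<rceil> + 1) \<le> 16 * l * L ^ 3"
proof -
  have "1 \<le> l * L\<^sup>2"
    using mult_mono[OF assms(2), of 4 "L\<^sup>2"] power_mono[OF assms(1), of 2] assms(2) by simp
  then have "real (nat \<lceil>2 * L\<rceil>) \<le> 3 * L" "real (nat \<lceil>4 * l * L\<^sup>2\<rceil>) \<le> 5 * l * L\<^sup>2"
    using assms(1) by linarith+
  then have "real (nat \<lceil>2 * L\<rceil> * nat \<lceil>4 * l * L\<^sup>2\<rceil> + 1) \<le> 3 * L * (5 * l * L\<^sup>2) + 1"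
    unfolding of_nat_add of_nat_mult of_nat_1 by (intro add_right_mono mult_mono) auto
  moreover have "l * L\<^sup>2 * 1 \<le> l * L\<^sup>2 * L"
    using \<open>1 \<le> l * L\<^sup>2\<close> assms(1) by (intro mult_left_mono) auto
  moreover have "l * L ^ 3 = l * L\<^sup>2 * L" "3 * L * (5 * l * L\<^sup>2) = 15 * (l * L ^ 3)"
    by (simp_all add: power2_eq_square power3_eq_cube)
  ultimately show ?thesis
    using \<open>1 \<le> l * L\<^sup>2\<close> by linarith
qed

lemma exp_le_four_power:
  assumes "x \<le> real n"
  shows "exp x \<le> 4 ^ n"
proof -
  have "1 \<le> ln (4 :: real)"
    using exp_le by (subst ln_ge_iff) auto
  then have "x \<le> real n * ln 4"
    using assms mult_left_mono[of 1 "ln 4" "real n"] by simp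
  then have "exp x \<le> exp (real n * ln 4)"
    by simp
  also have "\<dots> = 4 ^ n"
    by (simp add: exp_of_nat_mult)
  finally show ?thesis .
qed

lemma kronecker_size_bounds:
  assumes L: "large_scale L" and l: "1 / 2 \<le> l" "l \<le> exp (L / 2)" and k: "real k * l \<le> exp L / L ^ 8"
    and R: "0 \<le> R" "R \<le> 16 * l * L ^ 3"
  shows "R \<le> exp L" "8 * real k * R \<le> exp (2 * L)"
    and "L * (real k * R) \<le> 16 * exp L / L ^ 4" "L * real k \<le> 2 * exp L / L ^ 7"
proof -
  have "2 \<le> L"
    using L by (simp add: large_scale_def)
  have "16 * l * L ^ 3 \<le> 16 * exp (L / 2) * L ^ 3"
    using l(2) \<open>2 \<le> L\<close> by (intro mult_right_mono) auto
  moreover have "16 * exp (L / 2) * L ^ 3 = 16 * L ^ 3 * exp (L / 2)"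
    by simp
  ultimately have R_le: "R \<le> 16 * L ^ 3 * exp (L / 2)"
    using R(2) by linarith
  then show "R \<le> exp L"
    using L by (simp add: large_scale_def)
  have "real k * (1 / 2) \<le> real k * l"
    using l(1) by (intro mult_left_mono) auto
  then have k_le: "real k \<le> 2 * exp L / L ^ 8"
    using k by simp
  have "8 * real k * R \<le> 8 * (2 * exp L / L ^ 8) * (16 * L ^ 3 * exp (L / 2))"
    using k_le R_le R(1) by (intro mult_mono) auto
  then show "8 * real k * R \<le> exp (2 * L)"
    using L by (simp add: large_scale_def)
  have "real k * R \<le> real k * (16 * l * L ^ 3)"
    using R(2) by (intro mult_left_mono) auto
  also have "\<dots> = 16 * L ^ 3 * (real k * l)"
    by simp
  also have "\<dots> \<le> 16 * L ^ 3 * (exp L / L ^ 8)"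
    using k \<open>2 \<le> L\<close> by (intro mult_left_mono) auto
  finally have "L * (real k * R) \<le> L * (16 * L ^ 3 * (exp L / L ^ 8))"
    using \<open>2 \<le> L\<close> by (intro mult_left_mono) auto
  also have "\<dots> = 16 * exp L / L ^ 4"
    using \<open>2 \<le> L\<close> by (simp add: field_simps flip: power_add power_Suc)
  finally show "L * (real k * R) \<le> 16 * exp L / L ^ 4" .
  have "L * real k \<le> L * (2 * exp L / L ^ 8)"
    using k_le \<open>2 \<le> L\<close> by (intro mult_left_mono) auto
  also have "\<dots> = 2 * exp L / L ^ 7"
    using \<open>2 \<le> L\<close> by (simp add: field_simps flip: power_Suc)
  finally show "L * real k \<le> 2 * exp L / L ^ 7" .
qed

lemma kronecker_parameters:
  assumes L: "large_scale L" and l: "1 / 2 \<le> l" "l \<le> exp (L / 2)" and k: "real k * l \<le> exp L / L ^ 8"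
  shows "\<exists>N r. 4 * l * L\<^sup>2 \<le> real (N + 1) \<and> 8 * real k * real (r * N + 1) \<le> 4 ^ r \<and>
           8 * exp L ^ (r * N * k) * real (r * N + 1) ^ k \<le> exp (exp L) \<and>
           2 * real (r * N + 1) ^ k \<le> exp (exp L / L\<^sup>2)"
proof (intro exI conjI)
  define N r where "N = nat \<lceil>4 * l * L\<^sup>2\<rceil>" and "r = nat \<lceil>2 * L\<rceil>"
  define R where "R = real (r * N + 1)"
  have "2 \<le> L"
    using L by (simp add: large_scale_def)
  have "0 \<le> R" "R \<le> 16 * l * L ^ 3"
    unfolding R_def N_def r_def using ceiling_degree_le[OF \<open>2 \<le> L\<close> l(1)] by simp_all
  note bounds = kronecker_size_bounds[OF L l k this]
  show "4 * l * L\<^sup>2 \<le> real (N + 1)"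
    unfolding N_def by linarith
  show "8 * real k * real (r * N + 1) \<le> 4 ^ r"
    using bounds(2) exp_le_four_power[of "2 * L" r] unfolding R_def r_def by linarith
  have "8 * exp L ^ (r * N * k) * real (r * N + 1) ^ k \<le> 8 * exp L ^ (r * N * k) * exp L ^ k"
    using bounds(1) by (intro mult_left_mono power_mono) (auto simp: R_def)
  also have "\<dots> = exp (ln 8 + L * (real k * R))"
    by (simp add: R_def exp_add algebra_simps flip: power_add exp_of_nat_mult)
  also have "\<dots> \<le> exp (exp L)"
    using bounds(3) L by (simp add: large_scale_def)
  finally show "8 * exp L ^ (r * N * k) * real (r * N + 1) ^ k \<le> exp (exp L)" .
  have "2 * real (r * N + 1) ^ k \<le> 2 * exp L ^ k"
    using bounds(1) by (intro mult_left_mono power_mono) (auto simp: R_def)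
  also have "\<dots> = exp (ln 2 + L * real k)"
    by (simp add: exp_add mult.commute flip: exp_of_nat_mult)
  also have "\<dots> \<le> exp (exp L / L\<^sup>2)"
    using bounds(4) L by (simp add: large_scale_def)
  finally show "2 * real (r * N + 1) ^ k \<le> exp (exp L / L\<^sup>2)" .
qed

lemma measure_near_set_large_scale:
  assumes L: "large_scale L" and l: "1 / 2 \<le> l" "l \<le> exp (L / 2)"
    and P: "finite P" "\<And>p. p \<in> P \<Longrightarrow> prime p" "\<And>p. p \<in> P \<Longrightarrow> real p \<le> exp L"
    and f_norm: "\<And>p. p \<in> P \<Longrightarrow> norm (f p) = 1"
    and card: "real (card P) * l \<le> exp L / L ^ 8"
  shows "exp (exp L) powr (1 - 1 / L\<^sup>2) \<le> measure lebesgue (near_set f P (1 / (l * L\<^sup>2)) (exp (exp L)))"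
proof -
  have "0 < l * L\<^sup>2"
    using l(1) L by (simp add: large_scale_def)
  obtain N r where N: "4 * l * L\<^sup>2 \<le> real (N + 1)" and r: "8 * real (card P) * real (r * N + 1) \<le> 4 ^ r"
    and T: "8 * exp L ^ (r * N * card P) * real (r * N + 1) ^ card P \<le> exp (exp L)"
    and R: "2 * real (r * N + 1) ^ card P \<le> exp (exp L / L\<^sup>2)"
    using kronecker_parameters[OF L l card] by blast
  have "real ((\<Prod>P) ^ (r * N)) = (\<Prod>p\<in>P. real p) ^ (r * N)"
    by simp
  also have "\<dots> \<le> (\<Prod>p\<in>P. exp L) ^ (r * N)"
    using P by (intro power_mono prod_mono) (auto simp: prod_nonneg)
  also have "\<dots> = exp L ^ (r * N * card P)"
    by (simp add: power_mult[symmetric] mult.commute)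
  finally have "8 * real ((\<Prod>P) ^ (r * N)) * real (r * N + 1) ^ card P
                \<le> 8 * exp L ^ (r * N * card P) * real (r * N + 1) ^ card P"
    by (intro mult_right_mono) auto
  then have "8 * real ((\<Prod>P) ^ (r * N)) * real (r * N + 1) ^ card P \<le> exp (exp L)"
    using T by linarith
  then have "exp (exp L) / (2 * real (r * N + 1) ^ card P)
               \<le> measure lebesgue (near_set f P (1 / (l * L\<^sup>2)) (exp (exp L)))"
    using N r \<open>0 < l * L\<^sup>2\<close> P(1,2) f_norm by (intro measure_near_set_ge) (auto simp: mult_ac)
  moreover have "exp (exp L) powr (1 - 1 / L\<^sup>2) = exp (exp L) / exp (exp L / L\<^sup>2)"
    by (simp add: powr_def exp_diff algebra_simps)
  moreover have "exp (exp L) / exp (exp L / L\<^sup>2) \<le> exp (exp L) / (2 * real (r * N + 1) ^ card P)"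
    using R by (intro divide_left_mono) (auto simp: add_pos_nonneg)
  ultimately show ?thesis
    by linarith
qed

lemma smooth_sums_close_large_scale:
  fixes f :: "nat \<Rightarrow> complex" and T x :: real
  assumes L: "large_scale (ln (ln T))" "1 < T" and f: "completely_multiplicative f" "\<forall>n>0. norm (f n) = 1"
    and x: "2 \<le> x" "x \<le> exp (sqrt (ln T))"
  defines "y \<equiv> ln T / (ln x * ln (ln T) ^ 8)"
  shows "\<exists>S. S \<in> sets lebesgue \<and> S \<subseteq> {0..T} \<and> T powr (1 - 1 / (ln (ln T))\<^sup>2) \<le> measure lebesgue S \<and>
             (\<forall>t\<in>S. norm ((\<Sum>n\<in>{n. real n \<le> x \<and> n \<in> smooth y}. nit n t)
                           - (\<Sum>n\<in>{n. real n \<le> x \<and> n \<in> smooth y}. f n))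
                    \<le> 2 * real (Psi x y) / (ln (ln T))\<^sup>2)"
proof -
  define L where "L = ln (ln T)"
  define P where "P = {p. prime p \<and> real p \<le> x \<and> real p \<le> y}"
  define S where "S = near_set f P (1 / (ln x * L\<^sup>2)) T"
  have "2 \<le> L" "0 < ln T"
    using L by (simp_all add: L_def large_scale_def)
  then have eL: "exp L = ln T" and eT: "exp (exp L) = T"
    using \<open>1 < T\<close> by (simp_all add: L_def)
  have "ln x \<le> ln (exp (sqrt (ln T)))"
    using x by (intro ln_mono) auto
  also have "\<dots> = sqrt (ln T)"
    by simp
  also have "sqrt (ln T) = exp (L / 2)"
    unfolding eL[symmetric] by (rule real_sqrt_unique) (simp_all flip: exp_of_nat_mult)
  finally have "ln x \<le> exp (L / 2)" .
  have "ln 2 \<le> ln x"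
    using x(1) by simp
  then have "1 / 2 \<le> ln x"
    using ln2_ge_two_thirds by linarith
  then have "1 \<le> ln x * L ^ 8"
    using mult_mono[of "1 / 2" "ln x" 2 "L ^ 8"] power_mono[OF \<open>2 \<le> L\<close>, of 8] by simp
  then have "0 \<le> y" "y \<le> exp L"
    using \<open>0 < ln T\<close> unfolding y_def L_def[symmetric] eL[symmetric] by (simp_all add: divide_le_eq)
  moreover have "P \<subseteq> {p. prime p \<and> real p \<le> y}"
    by (auto simp: P_def)
  ultimately have "finite P" "real (card P) * ln x \<le> y * ln x"
    using card_primes_le[of y] card_mono[of "{p. prime p \<and> real p \<le> y}" P] \<open>1 / 2 \<le> ln x\<close>
    by (auto intro: finite_subset mult_right_mono)
  moreover have "y * ln x = exp L / L ^ 8"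
    using \<open>1 / 2 \<le> ln x\<close> unfolding y_def L_def[symmetric] eL by simp
  ultimately have "T powr (1 - 1 / L\<^sup>2) \<le> measure lebesgue S"
    unfolding S_def eT[symmetric]
    using L(1) \<open>1 / 2 \<le> ln x\<close> \<open>ln x \<le> exp (L / 2)\<close> \<open>y \<le> exp L\<close> f(2)
    by (intro measure_near_set_large_scale) (auto simp: L_def P_def prime_gt_0_nat)
  moreover have "S \<in> sets lebesgue" "S \<subseteq> {0..T}"
    unfolding S_def by (simp_all add: fmeasurableD lmeasurable_compact compact_near_set) (auto simp: near_set_def)
  ultimately show ?thesis
    using smooth_sum_diff_le_near_set[OF f x(1)] unfolding S_def P_def L_def by blast
qed

theorem lemma2p2:
  shows "\<exists>C T0. \<forall>T::real. T \<ge> T0 \<longrightarrow>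
    (\<forall>(f::nat \<Rightarrow> complex) (x::real).
       completely_multiplicative f \<longrightarrow> (\<forall>n>0. norm (f n) = 1) \<longrightarrow>
       2 \<le> x \<longrightarrow> x \<le> exp (sqrt (ln T)) \<longrightarrow>
       (let y = ln T / (ln x * (ln (ln T)) ^ 8) in
        \<exists>S. S \<in> sets lebesgue \<and> S \<subseteq> {0..T} \<and>
            measure lebesgue S \<ge> T powr (1 - 1 / (ln (ln T))\<^sup>2) \<and>
            (\<forall>t\<in>S. norm ((\<Sum>n\<in>{n. real n \<le> x \<and> n \<in> smooth y}. nit n t)
                            - (\<Sum>n\<in>{n. real n \<le> x \<and> n \<in> smooth y}. f n))
                     \<le> C * real (Psi x y) / (ln (ln T))\<^sup>2)))"
proof -
  obtain L0 where L0: "\<And>L. L0 \<le> L \<Longrightarrow> large_scale L"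
    using eventually_large_scale by (auto simp: eventually_at_top_linorder)
  have "1 < T \<and> large_scale (ln (ln T))" if "exp (exp L0) \<le> T" for T
  proof -
    have "0 < T"
      using that by (rule less_le_trans[OF exp_gt_zero])
    then have "exp L0 \<le> ln T"
      using that by (subst ln_ge_iff) auto
    then have "L0 \<le> ln (ln T)"
      by (subst ln_ge_iff) (auto intro: less_le_trans[OF exp_gt_zero])
    moreover have "1 < T"
      using that by (rule less_le_trans[rotated]) simp
    ultimately show ?thesis
      using L0 by blast
  qed
  then show ?thesis
    unfolding Let_def using smooth_sums_close_large_scale
    by (intro exI[of _ 2] exI[of _ "exp (exp L0)"] allI impI) auto
qed

end
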